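(* Let $n\ge 3$, let $\boldsymbol\ell=(\ell_1,\ldots,\ell_n)$ be a vector of positive numbers, and let $\mu,\tau_0\in\mathbb{R}$ be constants. Let $V_{\boldsymbol\ell}=\ell_1\cdots\ell_n$ be the volume of $(T^n,g_{\boldsymbol\ell})$. Consider the CMC conformal data set $(g_{\boldsymbol\ell},\ \mu\,\sigma^\flat_{\boldsymbol\ell},\ \tau_0)$ on $T^n$. \begin{enumerate} \item If $\tau_0$ and $\mu$ are nonzero and have the same sign, then the data set generates a CMC slice of a flat Kasner spacetime; the induced metric on the slice has volume $|\mu/\tau_0|\,V_{\boldsymbol\ell}$, and the Kasner spacetime is expanding if $\tau_0>0$ and contracting if $\tau_0<0$. \item If $\tau_0$ and $\mu$ are nonzero and have opposite signs, then the data set generates a CMC slice of a dual-to-flat Kasner spacetime; the induced metric on the slice has volume $|\mu/\tau_0|\,V_{\boldsymbol\ell}$, and the Kasner spacetime is expanding if $\tau_0>0$ and contracting if $\tau_0<0$. \item If $\tau_0=0$ and $\mu=0$, then the data set generates a homothety family (a one-parameter family related by constant rescalings) of CMC slices of static toroidal spacetimes. \item If exactly one of $\tau_0$, $\mu$ vanishes, then the data set generates no solution of the Einstein constraint equations. \end{enumerate}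
   Context: Let $q=\frac{2n}{n-2}$ and $\kappa=\frac{n-1}{n}$. Let $S^1=\mathbb{R}/\mathbb{Z}$ with unit coordinate $s$ (so $\int_{S^1}ds=1$), and $T^n=(S^1)^n$ with unit coordinates $(s^1,\ldots,s^n)$. For positive lengths $\boldsymbol\ell$, $g_{\boldsymbol\ell}=\sum_{k=1}^n\ell_k^2(ds^k)^2$ (a flat metric). Define $\sigma^\flat_{\boldsymbol\ell}=\kappa\,\ell_1^2(ds^1)^2-\frac1n\sum_{k=2}^n\ell_k^2(ds^k)^2$, which is transverse-traceless (divergence-free and trace-free) with respect to $g_{\boldsymbol\ell}$. Einstein constraint equations for $(\bar g,\bar K)$ on $T^n$: $R_{\bar g}-|\bar K|^2_{\bar g}+(\mathrm{tr}_{\bar g}\bar K)^2=0$ and $\mathrm{div}_{\bar g}\bar K=d(\mathrm{tr}_{\bar g}\bar K)$. CMC conformal method: a data set $(g,\sigma,\tau_0)$ with $\sigma$ transverse-traceless and $\tau_0$ constant generates the solutions $\bar g=\phi^{q-2}g$, $\bar K=\phi^{-2}\sigma+\frac{\tau_0}{n}\bar g$ of the constraint equations, one for each positive solution $\phi$ of the Lichnerowicz–York equation $-2\kappa q\,\Delta_g\phi+R_g\phi-|\sigma|_g^2\phi^{-q-1}+\kappa\tau_0^2\phi^{q-1}=0$. A Kasner spacetime with exponents $\mathbf a=(a_1,\ldots,a_n)$ (satisfying $\sum a_k=1$, $\sum a_k^2=1$) and lengths $\bar{\boldsymbol\ell}$ is $\mathbb{R}_+\times T^n$ (expanding) or $\mathbb{R}_-\times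 T^n$ (contracting) with metric $-dt^2+\sum_k|t|^{2a_k}\bar\ell_k^2(ds^k)^2$, time-oriented by $\partial_t$. It is flat Kasner if $\mathbf a=(1,0,\ldots,0)$ and dual-to-flat Kasner if $\mathbf a=(-2/q,2/n,\ldots,2/n)$. A static toroidal spacetime is $\mathbb{R}\times T^n$ with metric $-dt^2+g_{\boldsymbol\ell}$ for some lengths $\boldsymbol\ell$. A data set "generates a slice" of a spacetime if the generated $(\bar g,\bar K)$ is the induced metric and second fundamental form $K(X,Y)=-\langle n,\nabla_XY\rangle$ ($n$ the future unit normal) of an embedded spacelike hypersurface; CMC means constant mean curvature $\mathrm{tr}\,\bar K$. *)

theory Defs
  imports "HOL-Analysis.Analysis"
begin

text \<open>The torus T^n is R^n modulo Z^n (unit coordinates s), with n = CARD('n).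
Functions/tensor fields on T^n are Z^n-periodic functions on real^'n. A symmetric 2-tensor
field is given by its components in the coordinates s: real^'n => 'n => 'n => real.
The distinguished index i1 plays the role of the first coordinate s^1.\<close>

definition qexp :: "real \<Rightarrow> real" where "qexp n = 2 * n / (n - 2)"
definition kappa :: "real \<Rightarrow> real" where "kappa n = (n - 1) / n"

definition pd :: "(real^'n \<Rightarrow> real) \<Rightarrow> 'n \<Rightarrow> real^'n \<Rightarrow> real" where
  "pd f i x = deriv (\<lambda>t. f (x + t *\<^sub>R axis i 1)) 0"

fun pds :: "(real^'n \<Rightarrow> real) \<Rightarrow> 'n list \<Rightarrow> real^'n \<Rightarrow> real" where
  "pds f [] = f"
| "pds f (i # is) = pd (pds f is) i"

definition smooth_fun :: "(real^'n \<Rightarrow> real) \<Rightarrow> bool" where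
  "smooth_fun f \<longleftrightarrow> (\<forall>is. continuous_on UNIV (pds f is) \<and>
      (\<forall>i x. (\<lambda>t. pds f is (x + t *\<^sub>R axis i 1)) differentiable (at 0)))"

definition periodic_fun :: "(real^'n \<Rightarrow> real) \<Rightarrow> bool" where
  "periodic_fun f \<longleftrightarrow> (\<forall>x k. f (x + axis k 1) = f x)"

definition int_vec :: "real^'n \<Rightarrow> bool" where
  "int_vec v \<longleftrightarrow> (\<forall>k. v $ k \<in> \<int>)"

definition flat_metric :: "('n::finite \<Rightarrow> real) \<Rightarrow> 'n \<Rightarrow> 'n \<Rightarrow> real" where
  "flat_metric l i j = (if i = j then (l i)^2 else 0)"

definition sigma_flat :: "'n::finite \<Rightarrow> ('n \<Rightarrow> real) \<Rightarrow> 'n \<Rightarrow> 'n \<Rightarrow> real" where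
  "sigma_flat i1 l i j =
     (if i = j then (if i = i1 then kappa (real CARD('n)) * (l i)^2
                     else - (1 / real CARD('n)) * (l i)^2) else 0)"

definition flat_laplacian :: "('n::finite \<Rightarrow> real) \<Rightarrow> (real^'n \<Rightarrow> real) \<Rightarrow> real^'n \<Rightarrow> real" where
  "flat_laplacian l \<phi> x = (\<Sum>k\<in>UNIV. pd (pd \<phi> k) k x / (l k)^2)"

definition tnorm2 :: "('n::finite \<Rightarrow> real) \<Rightarrow> ('n \<Rightarrow> 'n \<Rightarrow> real) \<Rightarrow> real" where
  "tnorm2 l S = (\<Sum>i\<in>UNIV. \<Sum>j\<in>UNIV. (S i j)^2 / ((l i)^2 * (l j)^2))"

definition flat_scalar_curvature :: "real" where "flat_scalar_curvature = 0"

definition LY_solution :: "('n::finite \<Rightarrow> real) \<Rightarrow> (real^'n \<Rightarrow> 'n \<Rightarrow> 'n \<Rightarrow> real) \<Rightarrow> real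
    \<Rightarrow> (real^'n \<Rightarrow> real) \<Rightarrow> bool" where
  "LY_solution l \<sigma> \<tau>0 \<phi> \<longleftrightarrow>
     smooth_fun \<phi> \<and> periodic_fun \<phi> \<and> (\<forall>x. \<phi> x > 0) \<and>
     (\<forall>x. - 2 * kappa (real CARD('n)) * qexp (real CARD('n)) * flat_laplacian l \<phi> x
          + flat_scalar_curvature * \<phi> x
          - tnorm2 l (\<sigma> x) * \<phi> x powr (- qexp (real CARD('n)) - 1)
          + kappa (real CARD('n)) * \<tau>0^2 * \<phi> x powr (qexp (real CARD('n)) - 1) = 0)"

definition gen_metric :: "('n::finite \<Rightarrow> real) \<Rightarrow> (real^'n \<Rightarrow> real) \<Rightarrow> real^'n \<Rightarrow> 'n \<Rightarrow> 'n \<Rightarrow> real" where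
  "gen_metric l \<phi> x i j = \<phi> x powr (qexp (real CARD('n)) - 2) * flat_metric l i j"

definition gen_K :: "('n::finite \<Rightarrow> real) \<Rightarrow> (real^'n \<Rightarrow> 'n \<Rightarrow> 'n \<Rightarrow> real) \<Rightarrow> real
    \<Rightarrow> (real^'n \<Rightarrow> real) \<Rightarrow> real^'n \<Rightarrow> 'n \<Rightarrow> 'n \<Rightarrow> real" where
  "gen_K l \<sigma> \<tau>0 \<phi> x i j = \<phi> x powr (-2) * \<sigma> x i j + \<tau>0 / real CARD('n) * gen_metric l \<phi> x i j"

text \<open>Spacetimes I x T^n with metric -dt^2 + sum_k f_k(t)^2 (ds^k)^2, time-oriented by d/dt.
Points/tangent vectors are pairs (t-component, s-components).\<close>
definition st_metric :: "('n::finite \<Rightarrow> real \<Rightarrow> real) \<Rightarrow> real \<Rightarrow> real \<times> (real^'n) \<Rightarrow> real \<times> (real^'n) \<Rightarrow> real" where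
  "st_metric f t X Z = - fst X * fst Z + (\<Sum>k\<in>UNIV. (f k t)^2 * (snd X $ k) * (snd Z $ k))"

text \<open>Coordinate tangent vector d_i F of the map F = (T, Y) (lift of a map T^n -> I x T^n).\<close>
definition tang :: "(real^'n::finite \<Rightarrow> real) \<Rightarrow> (real^'n \<Rightarrow> real^'n) \<Rightarrow> 'n \<Rightarrow> real^'n \<Rightarrow> real \<times> (real^'n)" where
  "tang T Y i x = (pd T i x, \<chi> k. pd (\<lambda>z. Y z $ k) i x)"

text \<open>Covariant derivative nabla_{d_i F} d_j F, using the Christoffel symbols
Gamma^t_kk = f_k f_k', Gamma^k_tk = Gamma^k_kt = f_k'/f_k.\<close>
definition accel :: "('n::finite \<Rightarrow> real \<Rightarrow> real) \<Rightarrow> (real^'n \<Rightarrow> real) \<Rightarrow> (real^'n \<Rightarrow> real^'n)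
    \<Rightarrow> 'n \<Rightarrow> 'n \<Rightarrow> real^'n \<Rightarrow> real \<times> (real^'n)" where
  "accel f T Y i j x =
     (pd (pd T j) i x + (\<Sum>k\<in>UNIV. f k (T x) * deriv (f k) (T x)
                                      * pd (\<lambda>z. Y z $ k) i x * pd (\<lambda>z. Y z $ k) j x),
      \<chi> k. pd (pd (\<lambda>z. Y z $ k) j) i x
            + deriv (f k) (T x) / f k (T x)
              * (pd T i x * pd (\<lambda>z. Y z $ k) j x + pd T j x * pd (\<lambda>z. Y z $ k) i x))"

definition mean_curv :: "(real^'n::finite \<Rightarrow> 'n \<Rightarrow> 'n \<Rightarrow> real) \<Rightarrow> (real^'n \<Rightarrow> 'n \<Rightarrow> 'n \<Rightarrow> real)
    \<Rightarrow> real^'n \<Rightarrow> real" where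
  "mean_curv gb Kb x = (\<Sum>i\<in>UNIV. \<Sum>j\<in>UNIV. matrix_inv (\<chi> a b. gb x a b) $ i $ j * Kb x i j)"

text \<open>(gb, Kb) on T^n is the induced metric and second fundamental form K(X,Y) = -<N, nabla_X Y>
(N the future unit normal) of an embedded spacelike CMC hypersurface of the spacetime
I x T^n with metric -dt^2 + sum_k f_k(t)^2 (ds^k)^2, via a smooth embedding of T^n given by
a lift F = (T, Y) : R^n -> I x R^n.\<close>
definition cmc_slice :: "real set \<Rightarrow> ('n::finite \<Rightarrow> real \<Rightarrow> real)
    \<Rightarrow> (real^'n \<Rightarrow> 'n \<Rightarrow> 'n \<Rightarrow> real) \<Rightarrow> (real^'n \<Rightarrow> 'n \<Rightarrow> 'n \<Rightarrow> real) \<Rightarrow> bool" where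
  "cmc_slice I f gb Kb \<longleftrightarrow>
    (\<exists>T Y N.
       smooth_fun T \<and> (\<forall>k. smooth_fun (\<lambda>z. Y z $ k)) \<and>
       (\<forall>x. T x \<in> I) \<and>
       (\<forall>x j. T (x + axis j 1) = T x \<and> int_vec (Y (x + axis j 1) - Y x)) \<and>
       (\<forall>x z. T x = T z \<and> int_vec (Y x - Y z) \<longrightarrow> int_vec (x - z)) \<and>
       (\<forall>x i j. st_metric f (T x) (tang T Y i x) (tang T Y j x) = gb x i j) \<and>
       (\<forall>x v. v \<noteq> 0 \<longrightarrow> (\<Sum>i\<in>UNIV. \<Sum>j\<in>UNIV. v $ i * v $ j * gb x i j) > 0) \<and>
       (\<forall>x. fst (N x) > 0 \<and> st_metric f (T x) (N x) (N x) = -1 \<and>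
            (\<forall>i. st_metric f (T x) (N x) (tang T Y i x) = 0)) \<and>
       (\<forall>x i j. - st_metric f (T x) (N x) (accel f T Y i j x) = Kb x i j) \<and>
       (\<exists>c. \<forall>x. mean_curv gb Kb x = c))"

definition kasner_exponents :: "('n::finite \<Rightarrow> real) \<Rightarrow> bool" where
  "kasner_exponents a \<longleftrightarrow> (\<Sum>k\<in>UNIV. a k) = 1 \<and> (\<Sum>k\<in>UNIV. (a k)^2) = 1"

definition kasner_f :: "('n \<Rightarrow> real) \<Rightarrow> ('n \<Rightarrow> real) \<Rightarrow> 'n \<Rightarrow> real \<Rightarrow> real" where
  "kasner_f a lb k t = \<bar>t\<bar> powr (a k) * lb k"

definition kasner_time :: "bool \<Rightarrow> real set" where
  "kasner_time expanding = (if expanding then {0<..} else {..<0})"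

definition flat_exps :: "'n \<Rightarrow> 'n \<Rightarrow> real" where
  "flat_exps i1 k = (if k = i1 then 1 else 0)"

definition dual_exps :: "'n::finite \<Rightarrow> 'n \<Rightarrow> real" where
  "dual_exps i1 k = (if k = i1 then - 2 / qexp (real CARD('n)) else 2 / real CARD('n))"

definition kasner_cmc_slice :: "('n::finite \<Rightarrow> real) \<Rightarrow> ('n \<Rightarrow> real) \<Rightarrow> bool
    \<Rightarrow> (real^'n \<Rightarrow> 'n \<Rightarrow> 'n \<Rightarrow> real) \<Rightarrow> (real^'n \<Rightarrow> 'n \<Rightarrow> 'n \<Rightarrow> real) \<Rightarrow> bool" where
  "kasner_cmc_slice a lb expanding gb Kb \<longleftrightarrow>
     kasner_exponents a \<and> (\<forall>k. lb k > 0) \<and>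
     cmc_slice (kasner_time expanding) (kasner_f a lb) gb Kb"

definition static_cmc_slice :: "('n::finite \<Rightarrow> real)
    \<Rightarrow> (real^'n \<Rightarrow> 'n \<Rightarrow> 'n \<Rightarrow> real) \<Rightarrow> (real^'n \<Rightarrow> 'n \<Rightarrow> 'n \<Rightarrow> real) \<Rightarrow> bool" where
  "static_cmc_slice l' gb Kb \<longleftrightarrow> (\<forall>k. l' k > 0) \<and> cmc_slice UNIV (\<lambda>k t. l' k) gb Kb"

definition torus_volume :: "(real^'n::finite \<Rightarrow> 'n \<Rightarrow> 'n \<Rightarrow> real) \<Rightarrow> real" where
  "torus_volume gb = integral (cbox 0 One) (\<lambda>x. sqrt (det (\<chi> i j. gb x i j)))"

end

theory Submission
  imports Defs
begin

text \<open>For the data \<open>(g\<^sub>\<ell>, \<mu> \<sigma>\<^sup>\<flat>\<^sub>\<ell>, \<tau>\<^sub>0)\<close> the metric is flat and \<open>|\<mu> \<sigma>\<^sup>\<flat>|\<^sup>2 = \<mu>\<^sup>2 \<kappa>\<close> is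
  constant, so the Lichnerowicz--York equation becomes
  \<open>2 q \<Delta>\<phi> = \<tau>\<^sub>0\<^sup>2 \<phi>\<^bsup>q-1\<^esup> - \<mu>\<^sup>2 \<phi>\<^bsup>-q-1\<^esup>\<close>. Unless \<open>\<tau>\<^sub>0 = \<mu> = 0\<close> the right-hand side is
  strictly increasing in \<open>\<phi>\<close>; comparing its signs at a maximum and at a minimum of the periodic
  solution (where \<open>\<Delta>\<phi> \<le> 0\<close>, resp. \<open>\<ge> 0\<close>) forces \<open>\<phi>\<close> to be the constant \<open>c\<close> with
  \<open>|\<tau>\<^sub>0| c\<^sup>q = |\<mu>|\<close>, which is impossible if exactly one of \<open>\<tau>\<^sub>0, \<mu>\<close> vanishes. If
  \<open>\<tau>\<^sub>0 = \<mu> = 0\<close>, \<open>\<phi>\<close> is harmonic; at a maximum of \<open>y \<mapsto> \<integral> \<phi>(x + y)\<^sup>2 dx\<close> the second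
  derivatives give \<open>\<integral> \<Delta>(\<phi>\<^sup>2/2) \<le> 0\<close>, and \<open>\<Delta>(\<phi>\<^sup>2/2) = |\<nabla>\<phi>|\<^sup>2\<close>, so again \<open>\<phi>\<close> is constant.

  A constant \<open>\<phi>\<close> generates constant-coefficient data \<open>(\<bar>g\<close>, \<open>\<bar>K)\<close>, which is the slice
  \<open>t = 1/\<tau>\<^sub>0\<close> of the Kasner spacetime with exponents \<open>a\<^sub>k = \<bar>K\<^sub>k\<^sub>k / (\<tau>\<^sub>0 \<bar>g\<^sub>k\<^sub>k)\<close> (flat or
  dual-to-flat according to the sign of \<open>\<mu>/\<tau>\<^sub>0\<close>), respectively a slice of a static
  spacetime when \<open>\<tau>\<^sub>0 = 0\<close>. Its volume is \<open>c\<^bsup>(q-2)n/2\<^esup> V\<^sub>\<ell> = c\<^sup>q V\<^sub>\<ell> = |\<mu>/\<tau>\<^sub>0| V\<^sub>\<ell>\<close>.\<close>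

section \<open>Derivatives along coordinate axes\<close>

lemma DERIV2_nonpos_at_max:
  fixes g g' :: "real \<Rightarrow> real"
  assumes g': "\<And>t. (g has_real_derivative g' t) (at t)"
    and g'': "(g' has_real_derivative d) (at 0)"
    and max: "\<And>t. g t \<le> g 0"
  shows "d \<le> 0"
proof (rule ccontr)
  assume "\<not> d \<le> 0"
  have "g' 0 = 0"
    by (rule DERIV_local_max[OF g'[of 0], of 1]) (use max in auto)
  obtain e where e: "e > 0" "\<And>h. h > 0 \<Longrightarrow> h < e \<Longrightarrow> g' 0 < g' (0 + h)"
    using DERIV_pos_inc_right[OF g''] \<open>\<not> d \<le> 0\<close> by auto
  obtain z where z: "0 < z" "z < e/2" "g (e/2) - g 0 = e/2 * g' z"
    using MVT2[of 0 "e/2" g g'] e g' by auto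
  have "g' z > 0" using e(2)[of z] z \<open>g' 0 = 0\<close> by auto
  with e(1) have "(e/2) * g' z > 0" by simp
  with z(3) max[of "e/2"] show False by linarith
qed

lemma DERIV_along_axis_shift:
  fixes F :: "real^'n \<Rightarrow> real"
  assumes "\<And>z. ((\<lambda>t. F (z + t *\<^sub>R axis k 1)) has_real_derivative F' z) (at 0)"
  shows "((\<lambda>t. F (x + t *\<^sub>R axis k 1)) has_real_derivative F' (x + s *\<^sub>R axis k 1)) (at s)"
proof -
  have "(\<lambda>h. F ((x + s *\<^sub>R axis k 1) + h *\<^sub>R axis k 1)) = (\<lambda>h. F (x + (h + s) *\<^sub>R axis k 1))"
    by (auto simp: algebra_simps)
  with assms[of "x + s *\<^sub>R axis k 1"] show ?thesis
    using DERIV_shift[of "\<lambda>t. F (x + t *\<^sub>R axis k 1)" _ 0 s] by simp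
qed

lemma axis_DERIV2_nonpos_at_max:
  fixes F F' :: "real^'n \<Rightarrow> real"
  assumes "\<And>z. ((\<lambda>t. F (z + t *\<^sub>R axis k 1)) has_real_derivative F' z) (at 0)"
    and "((\<lambda>t. F' (xm + t *\<^sub>R axis k 1)) has_real_derivative d) (at 0)"
    and "\<And>x. F x \<le> F xm"
  shows "d \<le> 0"
  by (rule DERIV2_nonpos_at_max[where g="\<lambda>t. F (xm + t *\<^sub>R axis k 1)"
        and g'="\<lambda>t. F' (xm + t *\<^sub>R axis k 1)"])
     (use DERIV_along_axis_shift[OF assms(1)] assms(2,3) in auto)

lemma axis_DERIV2_nonneg_at_min:
  fixes F F' :: "real^'n \<Rightarrow> real"
  assumes "\<And>z. ((\<lambda>t. F (z + t *\<^sub>R axis k 1)) has_real_derivative F' z) (at 0)"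
    and "((\<lambda>t. F' (xm + t *\<^sub>R axis k 1)) has_real_derivative d) (at 0)"
    and "\<And>x. F xm \<le> F x"
  shows "d \<ge> 0"
proof -
  have "- d \<le> 0"
    by (rule axis_DERIV2_nonpos_at_max[where F="\<lambda>x. - F x" and F'="\<lambda>x. - F' x"])
       (use assms in \<open>auto intro!: derivative_intros\<close>)
  then show ?thesis by simp
qed

lemma smooth_fun_axis_derivatives:
  fixes u :: "real^'n \<Rightarrow> real"
  assumes "smooth_fun u"
  shows "continuous_on UNIV u" "continuous_on UNIV (pd u k)" "continuous_on UNIV (pd (pd u k) k)"
    "((\<lambda>t. u (z + t *\<^sub>R axis k 1)) has_real_derivative pd u k z) (at 0)"
    "((\<lambda>t. pd u k (z + t *\<^sub>R axis k 1)) has_real_derivative pd (pd u k) k z) (at 0)"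
proof -
  have cont: "continuous_on UNIV (pds u is)"
    and diff: "((\<lambda>t. pds u is (z + t *\<^sub>R axis k 1)) has_real_derivative pd (pds u is) k z) (at 0)"
    for "is"
    using assms unfolding smooth_fun_def pd_def by (auto simp: DERIV_deriv_iff_real_differentiable)
  show "continuous_on UNIV u" "continuous_on UNIV (pd u k)" "continuous_on UNIV (pd (pd u k) k)"
    using cont[of "[]"] cont[of "[k]"] cont[of "[k, k]"] by simp_all
  show "((\<lambda>t. u (z + t *\<^sub>R axis k 1)) has_real_derivative pd u k z) (at 0)"
    "((\<lambda>t. pd u k (z + t *\<^sub>R axis k 1)) has_real_derivative pd (pd u k) k z) (at 0)"
    using diff[of "[]"] diff[of "[k]"] by simp_all
qed

lemma pd_const [simp]: "pd (\<lambda>x::real^'n. c) i = (\<lambda>x. 0)"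
  unfolding pd_def by simp

lemma smooth_fun_const: "smooth_fun (\<lambda>x::real^'n. c)"
proof -
  have "pds (\<lambda>x::real^'n. c) is = (\<lambda>x. if is = [] then c else 0)" for "is"
    by (induction "is") auto
  then show ?thesis unfolding smooth_fun_def by (auto intro!: derivative_eq_intros)
qed

lemma flat_laplacian_nonpos_at_max:
  fixes u :: "real^'n \<Rightarrow> real"
  assumes u: "smooth_fun u" and l: "\<forall>k. l k > 0" and max: "\<And>x. u x \<le> u xm"
  shows "flat_laplacian l u xm \<le> 0"
  unfolding flat_laplacian_def
proof (rule sum_nonpos)
  fix k
  have "pd (pd u k) k xm \<le> 0"
    using axis_DERIV2_nonpos_at_max[OF smooth_fun_axis_derivatives(4,5)[OF u] max] .
  then show "pd (pd u k) k xm / (l k)^2 \<le> 0" using l[rule_format, of k] by (simp add: divide_nonpos_pos)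
qed

lemma flat_laplacian_nonneg_at_min:
  fixes u :: "real^'n \<Rightarrow> real"
  assumes u: "smooth_fun u" and l: "\<forall>k. l k > 0" and min: "\<And>x. u xm \<le> u x"
  shows "flat_laplacian l u xm \<ge> 0"
  unfolding flat_laplacian_def
proof (rule sum_nonneg)
  fix k
  have "pd (pd u k) k xm \<ge> 0"
    using axis_DERIV2_nonneg_at_min[OF smooth_fun_axis_derivatives(4,5)[OF u] min] .
  then show "pd (pd u k) k xm / (l k)^2 \<ge> 0" using l by simp
qed

section \<open>Periodic functions\<close>

lemma sum_axis_eq_vec: "(\<Sum>k\<in>UNIV. (v $ k) *\<^sub>R axis k (1::real)) = (v::real^'n)"
  by (simp add: vec_eq_iff axis_def if_distrib[where f="(*) _"] sum.delta cong: if_cong)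

lemma invariant_add_vec:
  fixes u :: "real^'n \<Rightarrow> 'a"
  assumes "\<And>z k. u (z + v $ k *\<^sub>R axis k 1) = u z"
  shows "u (z + v) = u z"
proof -
  have "u (z + (\<Sum>k\<in>S. v $ k *\<^sub>R axis k 1)) = u z" if "finite S" for S
    using that
  proof (induction S arbitrary: z rule: finite_induct)
    case (insert a S)
    have "u (z + (\<Sum>k\<in>insert a S. v $ k *\<^sub>R axis k 1))
        = u ((z + v $ a *\<^sub>R axis a 1) + (\<Sum>k\<in>S. v $ k *\<^sub>R axis k 1))"
      using insert.hyps by (simp add: algebra_simps)
    with insert.IH assms show ?case by simp
  qed simp
  from this[of UNIV] show ?thesis by (simp add: sum_axis_eq_vec)
qed

lemma periodic_fun_add_of_int_axis:
  assumes "periodic_fun F"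
  shows "F (x + of_int j *\<^sub>R axis k 1) = F x"
proof (induction j rule: int_induct[where k=0])
  case (step1 i)
  have "F (x + of_int (i + 1) *\<^sub>R axis k 1) = F ((x + of_int i *\<^sub>R axis k 1) + axis k 1)"
    by (simp add: algebra_simps)
  with step1 assms show ?case unfolding periodic_fun_def by simp
next
  case (step2 i)
  have "F (x + of_int i *\<^sub>R axis k 1) = F ((x + of_int (i - 1) *\<^sub>R axis k 1) + axis k 1)"
    by (simp add: algebra_simps)
  with step2 assms show ?case unfolding periodic_fun_def by simp
qed simp

lemma periodic_fun_add_int_vec:
  assumes "periodic_fun F" "int_vec v"
  shows "F (x + v) = F x"
proof (rule invariant_add_vec)
  fix z k
  from \<open>int_vec v\<close> obtain j where "v $ k = of_int j"
    unfolding int_vec_def by (metis Ints_cases)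
  then show "F (z + v $ k *\<^sub>R axis k 1) = F z"
    using periodic_fun_add_of_int_axis[OF assms(1)] by simp
qed

lemma ex_unit_cube_int_vec_diff: "\<exists>x'\<in>cbox 0 One. int_vec (x - x')"
proof
  let ?r = "\<chi> k. real_of_int \<lfloor>x $ k\<rfloor>"
  show "int_vec (x - (x - ?r))" unfolding int_vec_def by simp
  show "x - ?r \<in> cbox 0 One"
    unfolding mem_box_cart Cart_1[symmetric]
    by (auto simp: frac_lt_1[unfolded frac_def, THEN less_imp_le])
qed

lemma periodic_fun_attains_max:
  fixes F :: "real^'n \<Rightarrow> real"
  assumes "continuous_on UNIV F" "periodic_fun F"
  obtains xm where "\<And>x. F x \<le> F xm"
proof -
  have "cbox 0 (One::real^'n) \<noteq> {}" by (simp add: box_ne_empty)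
  then obtain xm where xm: "\<And>y. y \<in> cbox 0 One \<Longrightarrow> F y \<le> F xm"
    using continuous_attains_sup[OF compact_cbox _ continuous_on_subset[OF assms(1) subset_UNIV]]
    by blast
  have "F x \<le> F xm" for x
  proof -
    obtain x' where "x' \<in> cbox 0 One" "int_vec (x - x')" using ex_unit_cube_int_vec_diff by blast
    with xm periodic_fun_add_int_vec[OF assms(2), of "x - x'" x'] show ?thesis by simp
  qed
  then show ?thesis using that by blast
qed

lemma periodic_fun_attains_min:
  fixes F :: "real^'n \<Rightarrow> real"
  assumes "continuous_on UNIV F" "periodic_fun F"
  obtains xm where "\<And>x. F xm \<le> F x"
proof -
  have "continuous_on UNIV (\<lambda>x. - F x)" "periodic_fun (\<lambda>x. - F x)"
    using assms unfolding periodic_fun_def by (auto intro!: continuous_intros)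
  then obtain xm where "\<And>x. - F x \<le> - F xm" using periodic_fun_attains_max by metis
  then show ?thesis by (intro that) simp
qed

lemma periodic_fun_pd:
  assumes "periodic_fun u"
  shows "periodic_fun (pd u k)"
  unfolding periodic_fun_def
proof (intro allI)
  fix z and j
  have "(\<lambda>t. u (z + axis j 1 + t *\<^sub>R axis k 1)) = (\<lambda>t. u (z + t *\<^sub>R axis k 1))"
    using assms unfolding periodic_fun_def by (metis add.commute add.left_commute)
  then show "pd u k (z + axis j 1) = pd u k z" unfolding pd_def by simp
qed

lemma const_if_axis_derivatives_zero:
  fixes u :: "real^'n \<Rightarrow> real"
  assumes "\<And>z k. ((\<lambda>t. u (z + t *\<^sub>R axis k 1)) has_real_derivative 0) (at 0)"
  shows "u x = u 0"
proof -
  have "u (z + t *\<^sub>R axis k 1) = u z" for z t k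
  proof -
    have "\<forall>s. ((\<lambda>t. u (z + t *\<^sub>R axis k 1)) has_real_derivative 0) (at s)"
      using DERIV_along_axis_shift[where F'="\<lambda>_. 0"] assms by blast
    from DERIV_isconst_all[OF this, of t 0] show ?thesis by simp
  qed
  then show ?thesis using invariant_add_vec[of u x 0] by simp
qed

section \<open>Harmonic periodic functions are constant\<close>

lemma has_real_derivative_translate_integral:
  fixes h h' :: "real^'n \<Rightarrow> real"
  assumes h: "continuous_on UNIV h" and h': "continuous_on UNIV h'"
    and deriv: "\<And>z. ((\<lambda>t. h (z + t *\<^sub>R axis k 1)) has_real_derivative h' z) (at 0)"
  shows "((\<lambda>s. integral (cbox 0 One) (\<lambda>x. h (x + (y + s *\<^sub>R axis k 1))))
            has_real_derivative integral (cbox 0 One) (\<lambda>x. h' (x + y))) (at 0)"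
proof -
  have "((\<lambda>s. integral (cbox 0 One) (\<lambda>x. h (x + (y + s *\<^sub>R axis k 1))))
            has_real_derivative integral (cbox 0 One) (\<lambda>x. h' (x + (y + 0 *\<^sub>R axis k 1))))
          (at 0 within UNIV)"
  proof (rule leibniz_rule_field_derivative[where fx="\<lambda>s x. h' (x + (y + s *\<^sub>R axis k 1))"])
    fix s :: real and x :: "real^'n"
    show "((\<lambda>s. h (x + (y + s *\<^sub>R axis k 1))) has_real_derivative h' (x + (y + s *\<^sub>R axis k 1)))
            (at s within UNIV)"
      using DERIV_along_axis_shift[OF deriv, of "x + y" s] by (simp add: add.assoc)
    show "(\<lambda>x. h (x + (y + s *\<^sub>R axis k 1))) integrable_on cbox 0 One"
      by (intro integrable_continuous continuous_on_compose2[OF h]) (auto intro!: continuous_intros)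
  next
    have "continuous_on (UNIV \<times> cbox 0 One) (\<lambda>p. h' (snd p + (y + fst p *\<^sub>R axis k (1::real))))"
      by (rule continuous_on_compose2[OF h']) (auto intro!: continuous_intros)
    then show "continuous_on (UNIV \<times> cbox 0 One) (\<lambda>(s, x). h' (x + (y + s *\<^sub>R axis k 1)))"
      by (simp add: case_prod_beta)
  qed auto
  then show ?thesis by simp
qed

lemma continuous_on_translate_integral:
  fixes h :: "real^'n \<Rightarrow> real"
  assumes "continuous_on UNIV h"
  shows "continuous_on UNIV (\<lambda>y. integral (cbox 0 One) (\<lambda>x. h (x + y)))"
proof (rule integral_continuous_on_param)
  have "continuous_on (UNIV \<times> cbox 0 One) (\<lambda>p. h (snd p + fst p))"
    by (rule continuous_on_compose2[OF assms]) (auto intro!: continuous_intros)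
  then show "continuous_on (UNIV \<times> cbox 0 One) (\<lambda>(y, x). h (x + y))"
    by (simp add: case_prod_beta)
qed

text \<open>Translating the unit cube to a maximum point of \<open>y \<mapsto> \<integral> u(x + y)\<^sup>2/2 dx\<close>,
  the integral of each second axis derivative \<open>\<partial>\<^sub>k\<^sup>2(u\<^sup>2/2) = (\<partial>\<^sub>k u)\<^sup>2 + u \<partial>\<^sub>k\<^sup>2 u\<close>
  is nonpositive.\<close>

lemma periodic_fun_ex_translate_integral_nonpos:
  fixes u :: "real^'n \<Rightarrow> real"
  assumes u: "smooth_fun u" and per: "periodic_fun u"
  obtains y0 where "\<And>k. integral (cbox 0 One)
      (\<lambda>x. pd u k (x + y0) * pd u k (x + y0) + u (x + y0) * pd (pd u k) k (x + y0)) \<le> 0"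
proof -
  note u' = smooth_fun_axis_derivatives[OF u]
  define h0 where "h0 = (\<lambda>z. u z * u z / 2)"
  define h1 where "h1 = (\<lambda>k z. u z * pd u k z)"
  define h2 where "h2 = (\<lambda>k z. pd u k z * pd u k z + u z * pd (pd u k) k z)"
  define avg :: "(real^'n \<Rightarrow> real) \<Rightarrow> real^'n \<Rightarrow> real"
    where "avg = (\<lambda>h y. integral (cbox 0 One) (\<lambda>x. h (x + y)))"
  have cont: "continuous_on UNIV h0" "continuous_on UNIV (h1 k)" "continuous_on UNIV (h2 k)" for k
    unfolding h0_def h1_def h2_def using u' by (auto intro!: continuous_intros)
  have "((\<lambda>t. h0 (z + t *\<^sub>R axis k 1)) has_real_derivative h1 k z) (at 0)" for z k
    unfolding h0_def h1_def by (rule DERIV_cong[OF DERIV_cdivide[OF DERIV_mult[OF u'(4) u'(4)]]]) simp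
  then have dI0: "((\<lambda>t. avg h0 (y + t *\<^sub>R axis k 1)) has_real_derivative avg (h1 k) y) (at 0)" for y k
    unfolding avg_def by (rule has_real_derivative_translate_integral[OF cont(1,2)])
  have "((\<lambda>t. h1 k (z + t *\<^sub>R axis k 1)) has_real_derivative h2 k z) (at 0)" for z k
    unfolding h1_def h2_def by (rule DERIV_cong[OF DERIV_mult[OF u'(4) u'(5)]]) simp
  then have dI1: "((\<lambda>t. avg (h1 k) (y + t *\<^sub>R axis k 1)) has_real_derivative avg (h2 k) y) (at 0)" for y k
    unfolding avg_def by (rule has_real_derivative_translate_integral[OF cont(2,3)])
  have "periodic_fun (avg h0)"
    using per unfolding periodic_fun_def avg_def h0_def by (simp add: add.assoc[symmetric])
  moreover have "continuous_on UNIV (avg h0)"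
    unfolding avg_def by (rule continuous_on_translate_integral[OF cont(1)])
  ultimately obtain y0 where "\<And>y. avg h0 y \<le> avg h0 y0"
    using periodic_fun_attains_max by metis
  then have "avg (h2 k) y0 \<le> 0" for k
    by (rule axis_DERIV2_nonpos_at_max[OF dI0 dI1])
  then show ?thesis using that unfolding avg_def h2_def by blast
qed

lemma periodic_fun_eq_0_if_translate_integral_nonpos:
  fixes E :: "real^'n \<Rightarrow> real"
  assumes cont: "continuous_on UNIV E" and per: "periodic_fun E" and nonneg: "\<And>z. E z \<ge> 0"
    and int: "integral (cbox 0 One) (\<lambda>x. E (x + y0)) \<le> 0"
  shows "E z = 0"
proof -
  have cont_y0: "continuous_on (cbox 0 One) (\<lambda>x. E (x + y0))"
    by (rule continuous_on_compose2[OF cont]) (auto intro!: continuous_intros)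
  have "integral (cbox 0 One) (\<lambda>x. E (x + y0)) \<ge> 0"
    by (rule integral_nonneg[OF integrable_continuous[OF cont_y0]]) (simp add: nonneg)
  with int have "integral (cbox 0 One) (\<lambda>x. E (x + y0)) = 0" by simp
  then have cube: "\<forall>x\<in>cbox 0 One. E (x + y0) = 0"
    using integral_cbox_eq_0_iff[OF cont_y0] nonneg by (simp add: box_ne_empty)
  obtain x' where "x' \<in> cbox 0 One" "int_vec (z - y0 - x')"
    using ex_unit_cube_int_vec_diff by blast
  with periodic_fun_add_int_vec[OF per, of "z - y0 - x'" "x' + y0"] cube show ?thesis by simp
qed

lemma periodic_harmonic_const:
  fixes u :: "real^'n \<Rightarrow> real" and l :: "'n \<Rightarrow> real"
  assumes u: "smooth_fun u" and per: "periodic_fun u" and l: "\<forall>k. l k > 0"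
    and harmonic: "\<And>x. flat_laplacian l u x = 0"
  shows "u x = u 0"
proof -
  note u' = smooth_fun_axis_derivatives[OF u]
  have lk: "l k \<noteq> 0" for k using l by (metis less_irrefl)
  define E where "E = (\<lambda>z. \<Sum>k\<in>UNIV. pd u k z * pd u k z / (l k)^2)"
  define h2 where "h2 = (\<lambda>k z. pd u k z * pd u k z + u z * pd (pd u k) k z)"
  have E_eq: "E z = (\<Sum>k\<in>UNIV. h2 k z / (l k)^2)" for z
  proof -
    have "h2 k z / (l k)^2 = pd u k z * pd u k z / (l k)^2 + u z * (pd (pd u k) k z / (l k)^2)" for k
      by (simp add: h2_def add_divide_distrib)
    then have "(\<Sum>k\<in>UNIV. h2 k z / (l k)^2) = E z + u z * flat_laplacian l u z"
      by (simp add: sum.distrib sum_distrib_left E_def flat_laplacian_def)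
    with harmonic[of z] show ?thesis by simp
  qed
  obtain y0 where y0: "\<And>k. integral (cbox 0 One) (\<lambda>x. h2 k (x + y0)) \<le> 0"
    using periodic_fun_ex_translate_integral_nonpos[OF u per] unfolding h2_def by blast
  have "integral (cbox 0 One) (\<lambda>x. E (x + y0))
      = (\<Sum>k\<in>UNIV. integral (cbox 0 One) (\<lambda>x. h2 k (x + y0)) / (l k)^2)"
    unfolding E_eq
  proof (subst integral_sum)
    fix k
    have "continuous_on UNIV (\<lambda>z. h2 k z / (l k)^2)"
      unfolding h2_def using u' lk by (auto intro!: continuous_intros)
    then show "(\<lambda>x. h2 k (x + y0) / (l k)^2) integrable_on cbox 0 One"
      by (rule integrable_continuous[OF continuous_on_compose2]) (auto intro!: continuous_intros)
  qed simp_all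
  also have "\<dots> \<le> 0"
    using y0 by (intro sum_nonpos divide_nonpos_pos) (auto simp: lk)
  finally have int_E: "integral (cbox 0 One) (\<lambda>x. E (x + y0)) \<le> 0" .
  have "continuous_on UNIV E"
    unfolding E_def using u' lk by (auto intro!: continuous_intros)
  moreover have "periodic_fun E"
    using periodic_fun_pd[OF per] unfolding E_def periodic_fun_def by simp
  ultimately have "E z = 0" for z
    by (rule periodic_fun_eq_0_if_translate_integral_nonpos[OF _ _ _ int_E])
       (auto simp: E_def intro!: sum_nonneg)
  then have "pd u k z = 0" for k z
    using sum_nonneg_eq_0_iff[of UNIV "\<lambda>k. pd u k z * pd u k z / (l k)^2"] lk[of k]
    by (simp add: E_def) blast
  then show ?thesis
    using u'(4) by (intro const_if_axis_derivatives_zero) metis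
qed

section \<open>The Lichnerowicz--York equation for \<open>\<mu> \<sigma>\<^sup>\<flat>\<close>\<close>

lemma qexp_gt_2: "n > 2 \<Longrightarrow> qexp n > 2"
  unfolding qexp_def by (simp add: field_simps)

lemma kappa_pos: "n > 1 \<Longrightarrow> kappa n > 0"
  unfolding kappa_def by simp

lemma sum_if_eq_else:
  fixes a b :: real
  shows "(\<Sum>i\<in>(UNIV::'n::finite set). if i = i1 then a else b) = a + (real CARD('n) - 1) * b"
proof -
  have "(\<Sum>i\<in>(UNIV::'n set). if i = i1 then a else b) = (\<Sum>i\<in>UNIV. b + (if i = i1 then a - b else 0))"
    by (rule sum.cong) auto
  then show ?thesis by (simp add: sum.distrib algebra_simps)
qed

lemma tnorm2_sigma_flat:
  fixes l :: "'n::finite \<Rightarrow> real"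
  assumes l: "\<forall>k. l k > 0"
  shows "tnorm2 l (\<lambda>i j. \<mu> * sigma_flat i1 l i j) = \<mu>^2 * kappa (real CARD('n))"
proof -
  let ?n = "real CARD('n)"
  have lk: "l k \<noteq> 0" for k using l by (metis less_irrefl)
  have "(\<Sum>j\<in>UNIV. (\<mu> * sigma_flat i1 l i j)^2 / ((l i)^2 * (l j)^2))
      = (if i = i1 then \<mu>^2 * (kappa ?n)^2 else \<mu>^2 / ?n^2)" for i
  proof -
    have "(\<Sum>j\<in>UNIV. (\<mu> * sigma_flat i1 l i j)^2 / ((l i)^2 * (l j)^2))
        = (\<Sum>j\<in>UNIV. if j = i then (\<mu> * sigma_flat i1 l i i)^2 / ((l i)^2 * (l i)^2) else 0)"
      by (rule sum.cong) (auto simp: sigma_flat_def)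
    also have "\<dots> = (\<mu> * sigma_flat i1 l i i)^2 / ((l i)^2 * (l i)^2)"
      by simp
    also have "\<dots> = (if i = i1 then \<mu>^2 * (kappa ?n)^2 else \<mu>^2 / ?n^2)"
      unfolding sigma_flat_def using lk[of i] by (simp add: field_simps power2_eq_square)
    finally show ?thesis .
  qed
  then have "tnorm2 l (\<lambda>i j. \<mu> * sigma_flat i1 l i j) = \<mu>^2 * (kappa ?n)^2 + (?n - 1) * (\<mu>^2 / ?n^2)"
    unfolding tnorm2_def by (simp add: sum_if_eq_else)
  also have "\<dots> = \<mu>^2 * kappa ?n"
    unfolding kappa_def by (simp add: field_simps power2_eq_square)
  finally show ?thesis .
qed

text \<open>Since \<open>|\<mu> \<sigma>\<^sup>\<flat>|\<^sup>2 = \<mu>\<^sup>2 \<kappa>\<close> and \<open>R = 0\<close>, dividing the Lichnerowicz--York equation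
  by \<open>\<kappa>\<close> leaves \<open>2 q \<Delta>\<phi> = LY_reduced_rhs q \<tau>\<^sub>0 \<mu> \<phi>\<close>.\<close>

definition LY_reduced_rhs :: "real \<Rightarrow> real \<Rightarrow> real \<Rightarrow> real \<Rightarrow> real" where
  "LY_reduced_rhs q \<tau>0 \<mu> p = \<tau>0^2 * p powr (q - 1) - \<mu>^2 * p powr (- q - 1)"

lemma LY_solution_sigma_flatD:
  fixes l :: "'n::finite \<Rightarrow> real"
  assumes n: "CARD('n) \<ge> 2" and l: "\<forall>k. l k > 0"
    and LY: "LY_solution l (\<lambda>x i j. \<mu> * sigma_flat i1 l i j) \<tau>0 \<phi>"
  shows "smooth_fun \<phi>" "periodic_fun \<phi>" "\<And>x. \<phi> x > 0"
    "\<And>x. 2 * qexp (real CARD('n)) * flat_laplacian l \<phi> x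
           = LY_reduced_rhs (qexp (real CARD('n))) \<tau>0 \<mu> (\<phi> x)"
proof -
  show "smooth_fun \<phi>" "periodic_fun \<phi>" "\<And>x. \<phi> x > 0"
    using LY unfolding LY_solution_def by auto
  let ?q = "qexp (real CARD('n))" and ?\<kappa> = "kappa (real CARD('n))"
  fix x
  have "?\<kappa> * (2 * ?q * flat_laplacian l \<phi> x) = ?\<kappa> * LY_reduced_rhs ?q \<tau>0 \<mu> (\<phi> x)"
    using LY unfolding LY_solution_def LY_reduced_rhs_def flat_scalar_curvature_def tnorm2_sigma_flat[OF l]
    by (simp add: algebra_simps)
  moreover have "?\<kappa> > 0" using n by (intro kappa_pos) simp
  ultimately show "2 * ?q * flat_laplacian l \<phi> x = LY_reduced_rhs ?q \<tau>0 \<mu> (\<phi> x)" by simp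
qed

lemma LY_reduced_rhs_strict_mono:
  assumes q: "q > 1" and nontrivial: "\<tau>0 \<noteq> 0 \<or> \<mu> \<noteq> 0" and p: "0 < p" "p < p'"
  shows "LY_reduced_rhs q \<tau>0 \<mu> p < LY_reduced_rhs q \<tau>0 \<mu> p'"
proof -
  have "p powr (q - 1) < p' powr (q - 1)" using q p by (intro powr_less_mono2) auto
  then have inc: "\<tau>0^2 * p powr (q - 1) \<le> \<tau>0^2 * p' powr (q - 1)"
    and strict_inc: "\<tau>0 \<noteq> 0 \<Longrightarrow> \<tau>0^2 * p powr (q - 1) < \<tau>0^2 * p' powr (q - 1)"
    by (simp_all add: mult_left_mono)
  have "p' powr (- q - 1) < p powr (- q - 1)" using q p by (intro powr_less_mono2_neg) auto
  then have dec: "\<mu>^2 * p' powr (- q - 1) \<le> \<mu>^2 * p powr (- q - 1)"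
    and strict_dec: "\<mu> \<noteq> 0 \<Longrightarrow> \<mu>^2 * p' powr (- q - 1) < \<mu>^2 * p powr (- q - 1)"
    by (simp_all add: mult_left_mono)
  from nontrivial show ?thesis
  proof
    assume "\<tau>0 \<noteq> 0"
    with strict_inc dec show ?thesis
      unfolding LY_reduced_rhs_def by (meson diff_strict_right_mono less_le_trans diff_left_mono)
  next
    assume "\<mu> \<noteq> 0"
    with inc strict_dec show ?thesis
      unfolding LY_reduced_rhs_def by (meson diff_strict_left_mono le_less_trans diff_right_mono)
  qed
qed

lemma LY_reduced_rhs_eq_0_iff:
  assumes p: "p > 0"
  shows "LY_reduced_rhs q \<tau>0 \<mu> p = 0 \<longleftrightarrow> \<bar>\<tau>0\<bar> * p powr q = \<bar>\<mu>\<bar>"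
proof -
  have "LY_reduced_rhs q \<tau>0 \<mu> p * (p * p powr q) = (\<bar>\<tau>0\<bar> * p powr q)^2 - \<bar>\<mu>\<bar>^2"
    unfolding LY_reduced_rhs_def using p
    by (simp add: algebra_simps power2_eq_square powr_diff powr_minus divide_simps)
  moreover have "p * p powr q > 0" using p by simp
  ultimately have "LY_reduced_rhs q \<tau>0 \<mu> p = 0 \<longleftrightarrow> (\<bar>\<tau>0\<bar> * p powr q)^2 = \<bar>\<mu>\<bar>^2"
    by (metis mult_eq_0_iff order_less_irrefl right_minus_eq)
  also have "\<dots> \<longleftrightarrow> \<bar>\<tau>0\<bar> * p powr q = \<bar>\<mu>\<bar>"
    using p by (intro power2_eq_iff_nonneg) auto
  finally show ?thesis .
qed

text \<open>The maximum principle: at a maximum (minimum) of \<open>\<phi>\<close> we have \<open>\<Delta>\<phi> \<le> 0\<close> (\<open>\<ge> 0\<close>), so the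
  strictly increasing right-hand side is \<open>\<le> 0\<close> at the maximum value and \<open>\<ge> 0\<close> at the minimum
  value; hence the two values coincide.\<close>

lemma LY_solution_sigma_flat_const:
  fixes l :: "'n::finite \<Rightarrow> real"
  assumes n: "CARD('n) \<ge> 3" and l: "\<forall>k. l k > 0" and nontrivial: "\<tau>0 \<noteq> 0 \<or> \<mu> \<noteq> 0"
    and LY: "LY_solution l (\<lambda>x i j. \<mu> * sigma_flat i1 l i j) \<tau>0 \<phi>"
  obtains c where "c > 0" "\<And>x. \<phi> x = c" "\<bar>\<tau>0\<bar> * c powr qexp (real CARD('n)) = \<bar>\<mu>\<bar>"
proof -
  let ?q = "qexp (real CARD('n))"
  let ?H = "LY_reduced_rhs ?q \<tau>0 \<mu>"
  have "CARD('n) \<ge> 2" using n by simp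
  note \<phi> = LY_solution_sigma_flatD[OF this l LY]
  have q: "?q > 2" using n by (intro qexp_gt_2) simp
  have cont: "continuous_on UNIV \<phi>" using smooth_fun_axis_derivatives(1)[OF \<phi>(1)] .
  obtain xM where xM: "\<And>x. \<phi> x \<le> \<phi> xM" using periodic_fun_attains_max[OF cont \<phi>(2)] by blast
  obtain xm where xm: "\<And>x. \<phi> xm \<le> \<phi> x" using periodic_fun_attains_min[OF cont \<phi>(2)] by blast
  have "2 * ?q * flat_laplacian l \<phi> xM \<le> 0"
    using flat_laplacian_nonpos_at_max[OF \<phi>(1) l xM] q by (simp add: mult_nonneg_nonpos)
  then have max: "?H (\<phi> xM) \<le> 0" using \<phi>(4) by simp
  have "2 * ?q * flat_laplacian l \<phi> xm \<ge> 0"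
    using flat_laplacian_nonneg_at_min[OF \<phi>(1) l xm] q by simp
  then have min: "?H (\<phi> xm) \<ge> 0" using \<phi>(4) by simp
  have "\<not> \<phi> xm < \<phi> xM"
    using LY_reduced_rhs_strict_mono[of ?q, OF _ nontrivial \<phi>(3)] q max min by force
  then have const: "\<phi> x = \<phi> xm" for x using xm[of x] xM[of x] by simp
  show ?thesis
  proof
    show "\<phi> xm > 0" "\<phi> x = \<phi> xm" for x using \<phi>(3) const by auto
    have "?H (\<phi> xm) = 0" using max min const[of xM] by simp
    then show "\<bar>\<tau>0\<bar> * \<phi> xm powr ?q = \<bar>\<mu>\<bar>"
      using LY_reduced_rhs_eq_0_iff \<phi>(3) by blast
  qed
qed

lemma LY_solution_sigma_flat_harmonic_const:
  fixes l :: "'n::finite \<Rightarrow> real"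
  assumes n: "CARD('n) \<ge> 3" and l: "\<forall>k. l k > 0"
    and LY: "LY_solution l (\<lambda>x i j. 0 * sigma_flat i1 l i j) 0 \<phi>"
  shows "\<phi> x = \<phi> 0"
proof -
  have "CARD('n) \<ge> 2" using n by simp
  note \<phi> = LY_solution_sigma_flatD[OF this l LY]
  have "qexp (real CARD('n)) > 2" using n by (intro qexp_gt_2) simp
  then have "flat_laplacian l \<phi> x = 0" for x
    using \<phi>(4)[of x] by (simp add: LY_reduced_rhs_def)
  then show ?thesis using periodic_harmonic_const[OF \<phi>(1,2) l] by blast
qed

lemma LY_solution_sigma_flat_constI:
  fixes l :: "'n::finite \<Rightarrow> real"
  assumes l: "\<forall>k. l k > 0" and c: "c > 0" and balance: "\<bar>\<tau>0\<bar> * c powr qexp (real CARD('n)) = \<bar>\<mu>\<bar>"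
  shows "LY_solution l (\<lambda>x i j. \<mu> * sigma_flat i1 l i j) \<tau>0 (\<lambda>x. c)"
proof -
  let ?q = "qexp (real CARD('n))" and ?\<kappa> = "kappa (real CARD('n))"
  have "flat_laplacian l (\<lambda>x::real^'n. c) x = 0" for x
    unfolding flat_laplacian_def by simp
  moreover have "?\<kappa> * \<tau>0^2 * c powr (?q - 1) - \<mu>^2 * ?\<kappa> * c powr (- ?q - 1) = 0"
    using LY_reduced_rhs_eq_0_iff[OF c, of ?q \<tau>0 \<mu>] balance
    unfolding LY_reduced_rhs_def by (simp add: algebra_simps)
  ultimately show ?thesis
    using c smooth_fun_const
    unfolding LY_solution_def periodic_fun_def flat_scalar_curvature_def tnorm2_sigma_flat[OF l]
    by (simp add: algebra_simps)
qed

section \<open>Slices generated by constant solutions\<close>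

lemma pd_component: "pd (\<lambda>z::real^'n. z $ k) i = (\<lambda>z. axis i (1::real) $ k)"
proof
  fix x :: "real^'n"
  have "((\<lambda>t. x $ k + t * axis i 1 $ k) has_real_derivative axis i 1 $ k) (at 0)"
    by (auto intro!: derivative_eq_intros)
  then show "pd (\<lambda>z. z $ k) i x = axis i 1 $ k"
    unfolding pd_def by (simp add: DERIV_imp_deriv)
qed

lemma smooth_fun_component: "smooth_fun (\<lambda>z::real^'n. z $ k)"
  unfolding smooth_fun_def
proof (intro allI conjI)
  fix "is" :: "'n list" and i and x :: "real^'n"
  have "pds (\<lambda>z::real^'n. z $ k) is = (\<lambda>z. z $ k) \<or> (\<exists>c. pds (\<lambda>z::real^'n. z $ k) is = (\<lambda>z. c))"
    by (induction "is") (auto simp: pd_component)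
  moreover have "(\<lambda>t. (x + t *\<^sub>R axis i 1) $ k) = (\<lambda>t. x $ k + t * axis i (1::real) $ k)"
    by auto
  ultimately show "continuous_on UNIV (pds (\<lambda>z. z $ k) is)"
    and "(\<lambda>t. pds (\<lambda>z. z $ k) is (x + t *\<^sub>R axis i 1)) differentiable at 0"
    by (auto intro!: continuous_intros derivative_intros)
qed

lemma cmc_slice_const_time:
  fixes f :: "'n::finite \<Rightarrow> real \<Rightarrow> real" and gb Kb :: "real^'n \<Rightarrow> 'n \<Rightarrow> 'n \<Rightarrow> real"
  assumes t: "t \<in> I"
    and f': "\<And>k. (f k has_real_derivative f' k) (at t)"
    and f: "\<And>k. f k t \<noteq> 0"
    and gb: "\<And>x i j. gb x i j = (if i = j then (f i t)^2 else 0)"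
    and Kb: "\<And>x i j. Kb x i j = (if i = j then f i t * f' i else 0)"
  shows "cmc_slice I f gb Kb"
  unfolding cmc_slice_def
proof (intro exI[of _ "\<lambda>x. t"] exI[of _ "\<lambda>x. x"] exI[of _ "\<lambda>x. (1, 0)"] conjI allI impI)
  have tang: "tang (\<lambda>x. t) (\<lambda>x. x) i x = (0, axis i 1)" for i x
    unfolding tang_def pd_component by (simp add: vec_lambda_eta)
  have axis_sum: "(\<Sum>k\<in>UNIV. a k * axis i (1::real) $ k * axis j 1 $ k) = (if i = j then a i else 0)"
    for a :: "'n \<Rightarrow> real" and i j
    by (auto simp: axis_def if_distrib[where f="\<lambda>x. _ * x"] cong: if_cong)
  show "st_metric f t (tang (\<lambda>x. t) (\<lambda>x. x) i x) (tang (\<lambda>x. t) (\<lambda>x. x) j x) = gb x i j"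
    for x i j
    unfolding tang st_metric_def gb by (simp add: axis_sum)
  show "- st_metric f t (1, 0) (accel f (\<lambda>x. t) (\<lambda>x. x) i j x) = Kb x i j" for x i j
    unfolding st_metric_def accel_def pd_component Kb DERIV_imp_deriv[OF f'] by (simp add: axis_sum)
  show "0 < (\<Sum>i\<in>UNIV. \<Sum>j\<in>UNIV. v $ i * v $ j * gb x i j)" if "v \<noteq> 0" for x v
  proof -
    obtain k where k: "v $ k \<noteq> 0" using \<open>v \<noteq> 0\<close> by (metis vec_eq_iff zero_index)
    have "(\<Sum>i\<in>UNIV. \<Sum>j\<in>UNIV. v $ i * v $ j * gb x i j) = (\<Sum>i\<in>UNIV. (v $ i)^2 * (f i t)^2)"
      unfolding gb by (auto simp: if_distrib[where f="\<lambda>x. _ * x"] power2_eq_square cong: if_cong)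
    also have "\<dots> > 0"
      by (rule sum_pos2[of UNIV k]) (use k f in auto)
    finally show ?thesis .
  qed
  show "\<exists>c. \<forall>x. mean_curv gb Kb x = c"
    by (rule exI[of _ "mean_curv gb Kb 0"]) (simp add: mean_curv_def gb Kb)
  show "0 < fst (1::real, 0::real^'n)" "st_metric f t (1, 0) (1, 0) = -1"
    "st_metric f t (1, 0) (tang (\<lambda>x. t) (\<lambda>x. x) i x) = 0" for i x
    unfolding st_metric_def tang by simp_all
  show "int_vec (x + axis j 1 - x)" for x :: "real^'n" and j
    unfolding int_vec_def by (auto simp: axis_def)
qed (use t smooth_fun_const smooth_fun_component in auto)

lemma DERIV_real_abs:
  fixes x :: real
  assumes "x \<noteq> 0"
  shows "(abs has_real_derivative sgn x) (at x)"
proof (cases "x > 0")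
  case True
  have "eventually (\<lambda>t. t = \<bar>t\<bar>) (nhds x)"
    using eventually_nhds_in_open[of "{0<..}" x] True by (auto elim: eventually_mono)
  then show ?thesis using DERIV_cong_ev[OF refl _ refl] DERIV_ident True by fastforce
next
  case False
  with assms have "x < 0" by simp
  then have "eventually (\<lambda>t. - t = \<bar>t\<bar>) (nhds x)"
    using eventually_nhds_in_open[of "{..<0}" x] by (auto elim: eventually_mono)
  moreover have "((\<lambda>t. - t) has_real_derivative -1) (at x)" by (auto intro!: derivative_eq_intros)
  ultimately show ?thesis using DERIV_cong_ev[OF refl _ refl] \<open>x < 0\<close> by fastforce
qed

lemma DERIV_kasner_f:
  assumes t: "t \<noteq> 0"
  shows "(kasner_f a lb k has_real_derivative a k / t * kasner_f a lb k t) (at t)"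
proof -
  have "((\<lambda>t. \<bar>t\<bar> powr a k * lb k) has_real_derivative a k * \<bar>t\<bar> powr (a k - 1) * sgn t * lb k) (at t)"
    using DERIV_fun_powr[OF DERIV_real_abs[OF t], of "a k"] t by (auto intro: DERIV_cmult_right)
  moreover have "a k * \<bar>t\<bar> powr (a k - 1) * sgn t * lb k = a k / t * (\<bar>t\<bar> powr a k * lb k)"
    using t by (simp add: powr_diff sgn_if)
  ultimately show ?thesis unfolding kasner_f_def[abs_def] by simp
qed

lemma gen_metric_const:
  fixes l :: "'n::finite \<Rightarrow> real"
  assumes "\<And>x. \<phi> x = c"
  shows "gen_metric l \<phi> x i j = c powr (qexp (real CARD('n)) - 2) * flat_metric l i j"
  unfolding gen_metric_def assms ..

text \<open>With \<open>\<mu> = \<epsilon> \<tau>\<^sub>0 c\<^sup>q\<close> and \<open>\<phi> = c\<close>, the generated data satisfy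
  \<open>K\<^sub>k\<^sub>k = (\<tau>\<^sub>0 a\<^sub>k) g\<^sub>k\<^sub>k\<close> with the exponents below; this is the second fundamental form of the
  slice \<open>t = 1/\<tau>\<^sub>0\<close> of the Kasner spacetime with exponents \<open>a\<close>, since there \<open>f\<^sub>k' = (a\<^sub>k/t) f\<^sub>k\<close>.\<close>

definition sigma_flat_kasner_exps :: "real \<Rightarrow> 'n::finite \<Rightarrow> 'n \<Rightarrow> real" where
  "sigma_flat_kasner_exps \<epsilon> i1 k =
     (if k = i1 then \<epsilon> * kappa (real CARD('n)) + 1 / real CARD('n) else (1 - \<epsilon>) / real CARD('n))"

lemma kasner_exponents_sigma_flat_kasner_exps:
  assumes \<epsilon>: "\<epsilon> = 1 \<or> \<epsilon> = -1"
  shows "kasner_exponents (sigma_flat_kasner_exps \<epsilon> (i1::'n::finite))"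
proof -
  let ?n = "real CARD('n)"
  have n: "?n > 0" by simp
  have "(\<Sum>k\<in>UNIV. sigma_flat_kasner_exps \<epsilon> i1 k) = \<epsilon> * kappa ?n + 1 / ?n + (?n - 1) * ((1 - \<epsilon>) / ?n)"
    unfolding sigma_flat_kasner_exps_def by (rule sum_if_eq_else)
  also have "\<dots> = 1"
    unfolding kappa_def using n by (simp add: field_simps)
  finally have sum: "(\<Sum>k\<in>UNIV. sigma_flat_kasner_exps \<epsilon> i1 k) = 1" .
  have "(\<Sum>k\<in>UNIV. (sigma_flat_kasner_exps \<epsilon> i1 k)^2)
      = (\<epsilon> * kappa ?n + 1 / ?n)^2 + (?n - 1) * ((1 - \<epsilon>) / ?n)^2"
    unfolding sigma_flat_kasner_exps_def if_distrib[of "\<lambda>x. x^2"] by (rule sum_if_eq_else)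
  also have "\<dots> = 1"
    using \<epsilon> n unfolding kappa_def by (elim disjE) (simp_all add: field_simps power2_eq_square)
  finally show ?thesis
    using sum unfolding kasner_exponents_def by simp
qed

lemma flat_exps_eq_sigma_flat_kasner_exps: "flat_exps i1 = sigma_flat_kasner_exps 1 (i1::'n::finite)"
  by (auto simp: fun_eq_iff flat_exps_def sigma_flat_kasner_exps_def kappa_def field_simps)

lemma dual_exps_eq_sigma_flat_kasner_exps:
  assumes "CARD('n::finite) \<ge> 3"
  shows "dual_exps i1 = sigma_flat_kasner_exps (-1) (i1::'n)"
  using assms
  by (auto simp: fun_eq_iff dual_exps_def sigma_flat_kasner_exps_def kappa_def qexp_def field_simps)

lemma kasner_cmc_slice_sigma_flat_const:
  fixes l :: "'n::finite \<Rightarrow> real"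
  assumes l: "\<forall>k. l k > 0" and \<tau>0: "\<tau>0 \<noteq> 0" and c: "c > 0" and \<phi>: "\<And>x. \<phi> x = c"
    and \<epsilon>: "\<epsilon> = 1 \<or> \<epsilon> = -1" and \<mu>: "\<mu> = \<epsilon> * \<tau>0 * c powr qexp (real CARD('n))"
  shows "\<exists>lb. kasner_cmc_slice (sigma_flat_kasner_exps \<epsilon> i1) lb (\<tau>0 > 0)
           (gen_metric l \<phi>) (gen_K l (\<lambda>x i j. \<mu> * sigma_flat i1 l i j) \<tau>0 \<phi>)"
proof -
  let ?q = "qexp (real CARD('n))" and ?a = "sigma_flat_kasner_exps \<epsilon> i1"
  define s where "s = sqrt (c powr (?q - 2))"
  define t0 where "t0 = 1 / \<tau>0"
  define lb where "lb k = s * l k / \<bar>t0\<bar> powr ?a k" for k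
  have s: "s > 0" "s^2 = c powr (?q - 2)" unfolding s_def using c by auto
  have t0: "t0 \<noteq> 0" "t0 \<in> kasner_time (\<tau>0 > 0)"
    unfolding t0_def kasner_time_def using \<tau>0 by auto
  have lb: "lb k > 0" for k unfolding lb_def using s l t0 by simp
  have f: "kasner_f ?a lb k t0 = s * l k" for k
    unfolding kasner_f_def lb_def using t0 by simp
  have f': "(kasner_f ?a lb k has_real_derivative ?a k * \<tau>0 * (s * l k)) (at t0)" for k
    using DERIV_kasner_f[OF t0(1), of ?a lb k] f[of k] unfolding t0_def by simp
  have gm: "gen_metric l \<phi> x i j = (if i = j then (kasner_f ?a lb i t0)^2 else 0)" for x i j
    unfolding gen_metric_const[OF \<phi>] f flat_metric_def s(2)[symmetric] by (simp add: power_mult_distrib)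
  have gK: "gen_K l (\<lambda>x i j. \<mu> * sigma_flat i1 l i j) \<tau>0 \<phi> x i j
      = (if i = j then kasner_f ?a lb i t0 * (?a i * \<tau>0 * (s * l i)) else 0)" for x i j
  proof -
    have "c powr (-2) * \<mu> = \<epsilon> * \<tau>0 * s^2"
      unfolding \<mu> s(2) using c by (simp add: powr_add[symmetric])
    then show ?thesis
      unfolding gen_K_def gen_metric_const[OF \<phi>] \<phi> f s(2)[symmetric]
      by (auto simp: sigma_flat_def flat_metric_def sigma_flat_kasner_exps_def field_simps power2_eq_square)
  qed
  have "kasner_f ?a lb k t0 \<noteq> 0" for k using f s l by (metis less_irrefl mult_pos_pos)
  then have "cmc_slice (kasner_time (\<tau>0 > 0)) (kasner_f ?a lb)
      (gen_metric l \<phi>) (gen_K l (\<lambda>x i j. \<mu> * sigma_flat i1 l i j) \<tau>0 \<phi>)"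
    by (rule cmc_slice_const_time[OF t0(2) f' _ gm gK])
  then show ?thesis
    unfolding kasner_cmc_slice_def
    using kasner_exponents_sigma_flat_kasner_exps[OF \<epsilon>] lb by blast
qed

lemma torus_volume_gen_metric_const:
  fixes l :: "'n::finite \<Rightarrow> real"
  assumes n: "CARD('n) \<ge> 3" and l: "\<forall>k. l k > 0" and c: "c > 0" and \<phi>: "\<And>x. \<phi> x = c"
  shows "torus_volume (gen_metric l \<phi>) = c powr qexp (real CARD('n)) * (\<Prod>k\<in>UNIV. l k)"
proof -
  let ?n = "real CARD('n)" and ?q = "qexp (real CARD('n))"
  define s where "s = sqrt (c powr (?q - 2))"
  have s: "s > 0" "s^2 = c powr (?q - 2)" unfolding s_def using c by auto
  have "det (\<chi> i j. gen_metric l \<phi> x i j) = (\<Prod>k\<in>UNIV. s * l k)^2" for x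
    unfolding gen_metric_const[OF \<phi>] s(2)[symmetric]
    by (subst det_diagonal) (simp_all add: flat_metric_def power_mult_distrib prod_power_distrib)
  moreover have "(\<Prod>k\<in>UNIV. s * l k) = c powr ?q * (\<Prod>k\<in>UNIV. l k)"
  proof -
    have "s ^ CARD('n) = s powr ?n" using s by (simp add: powr_realpow)
    also have "\<dots> = c powr ((?q - 2) / 2 * ?n)"
    proof -
      have "s = c powr ((?q - 2) / 2)" unfolding s_def using c by (simp add: powr_half_sqrt_powr)
      then show ?thesis by (simp only: powr_powr)
    qed
    also have "(?q - 2) / 2 * ?n = ?q" using n unfolding qexp_def by (simp add: field_simps)
    finally show ?thesis by (simp add: prod.distrib)
  qed
  moreover have "(\<Prod>k\<in>UNIV. s * l k) > 0" using s l by (simp add: prod_pos)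
  ultimately show ?thesis unfolding torus_volume_def by simp
qed

lemma static_cmc_slice_const:
  fixes l :: "'n::finite \<Rightarrow> real"
  assumes l: "\<forall>k. l k > 0" and c: "c > 0" and \<phi>: "\<And>x. \<phi> x = c"
  shows "static_cmc_slice (\<lambda>k. sqrt (c powr (qexp (real CARD('n)) - 2)) * l k)
           (gen_metric l \<phi>) (gen_K l (\<lambda>x i j. 0 * sigma_flat i1 l i j) 0 \<phi>)"
proof -
  define s where "s = sqrt (c powr (qexp (real CARD('n)) - 2))"
  have s: "s > 0" "s^2 = c powr (qexp (real CARD('n)) - 2)" unfolding s_def using c by auto
  have "cmc_slice UNIV (\<lambda>k t. s * l k) (gen_metric l \<phi>) (gen_K l (\<lambda>x i j. 0 * sigma_flat i1 l i j) 0 \<phi>)"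
  proof (rule cmc_slice_const_time[where t=0 and f'="\<lambda>k. 0"])
    show "s * l k \<noteq> 0" for k using s l by (metis less_irrefl mult_pos_pos)
    show "gen_metric l \<phi> x i j = (if i = j then (s * l i)^2 else 0)" for x i j
      unfolding gen_metric_const[OF \<phi>] s(2)[symmetric] flat_metric_def by (simp add: power_mult_distrib)
  qed (simp_all add: gen_K_def)
  then show ?thesis unfolding static_cmc_slice_def s_def[symmetric] using s l by simp
qed

section \<open>The four cases\<close>

lemma sigma_flat_kasner_case:
  fixes l :: "'n::finite \<Rightarrow> real"
  assumes n: "CARD('n) \<ge> 3" and l: "\<forall>k. l k > 0" and \<epsilon>: "\<epsilon> = 1 \<or> \<epsilon> = -1"
  shows "\<tau>0 \<noteq> 0 \<and> \<mu> \<noteq> 0 \<and> sgn \<tau>0 = \<epsilon> * sgn \<mu> \<longrightarrow>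
       (\<exists>\<phi>. LY_solution l (\<lambda>x i j. \<mu> * sigma_flat i1 l i j) \<tau>0 \<phi>) \<and>
       (\<forall>\<phi>. LY_solution l (\<lambda>x i j. \<mu> * sigma_flat i1 l i j) \<tau>0 \<phi> \<longrightarrow>
          (\<exists>lb. kasner_cmc_slice (sigma_flat_kasner_exps \<epsilon> i1) lb (\<tau>0 > 0)
                   (gen_metric l \<phi>) (gen_K l (\<lambda>x i j. \<mu> * sigma_flat i1 l i j) \<tau>0 \<phi>)) \<and>
          torus_volume (gen_metric l \<phi>) = \<bar>\<mu> / \<tau>0\<bar> * (\<Prod>k\<in>UNIV. l k))"
proof (intro impI conjI allI)
  let ?q = "qexp (real CARD('n))"
  assume "\<tau>0 \<noteq> 0 \<and> \<mu> \<noteq> 0 \<and> sgn \<tau>0 = \<epsilon> * sgn \<mu>"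
  then have \<tau>0: "\<tau>0 \<noteq> 0" and \<mu>: "\<mu> \<noteq> 0" and "sgn \<tau>0 = \<epsilon> * sgn \<mu>" by simp_all
  with \<epsilon> have sgn: "sgn \<mu> = \<epsilon> * sgn \<tau>0" by (elim disjE) simp_all
  have q: "?q > 2" using n by (intro qexp_gt_2) simp
  let ?c = "(\<bar>\<mu>\<bar> / \<bar>\<tau>0\<bar>) powr (1 / ?q)"
  have "?c > 0" using \<mu> \<tau>0 by simp
  moreover have "\<bar>\<tau>0\<bar> * ?c powr ?q = \<bar>\<mu>\<bar>" using \<tau>0 q by (simp add: powr_powr)
  ultimately show "\<exists>\<phi>. LY_solution l (\<lambda>x i j. \<mu> * sigma_flat i1 l i j) \<tau>0 \<phi>"
    by (blast intro: LY_solution_sigma_flat_constI[OF l])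
  fix \<phi> assume LY: "LY_solution l (\<lambda>x i j. \<mu> * sigma_flat i1 l i j) \<tau>0 \<phi>"
  obtain c where c: "c > 0" "\<And>x. \<phi> x = c" and balance: "\<bar>\<tau>0\<bar> * c powr ?q = \<bar>\<mu>\<bar>"
    using LY_solution_sigma_flat_const[OF n l _ LY] \<tau>0 by blast
  have "\<mu> = sgn \<mu> * \<bar>\<mu>\<bar>" by (rule sgn_mult_abs[symmetric])
  also have "\<dots> = \<epsilon> * (sgn \<tau>0 * \<bar>\<tau>0\<bar>) * c powr ?q" unfolding sgn balance[symmetric] by (simp only: ac_simps)
  finally have "\<mu> = \<epsilon> * \<tau>0 * c powr ?q" by (simp only: sgn_mult_abs)
  then show "\<exists>lb. kasner_cmc_slice (sigma_flat_kasner_exps \<epsilon> i1) lb (\<tau>0 > 0)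
      (gen_metric l \<phi>) (gen_K l (\<lambda>x i j. \<mu> * sigma_flat i1 l i j) \<tau>0 \<phi>)"
    by (rule kasner_cmc_slice_sigma_flat_const[where \<phi>=\<phi>, OF l \<tau>0 c \<epsilon>])
  have "c powr ?q = \<bar>\<mu> / \<tau>0\<bar>" using balance \<tau>0 by (simp add: abs_divide field_simps)
  then show "torus_volume (gen_metric l \<phi>) = \<bar>\<mu> / \<tau>0\<bar> * (\<Prod>k\<in>UNIV. l k)"
    using torus_volume_gen_metric_const[OF n l c] by simp
qed

lemma sigma_flat_static_case:
  fixes l :: "'n::finite \<Rightarrow> real"
  assumes n: "CARD('n) \<ge> 3" and l: "\<forall>k. l k > 0"
  shows "\<tau>0 = 0 \<and> \<mu> = 0 \<longrightarrow>
       (\<forall>c>0. \<exists>\<phi>. LY_solution l (\<lambda>x i j. \<mu> * sigma_flat i1 l i j) \<tau>0 \<phi> \<and>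
                 (\<forall>x i j. gen_metric l \<phi> x i j = c * flat_metric l i j)) \<and>
       (\<forall>\<phi>. LY_solution l (\<lambda>x i j. \<mu> * sigma_flat i1 l i j) \<tau>0 \<phi> \<longrightarrow>
          (\<exists>c>0. \<forall>x i j. gen_metric l \<phi> x i j = c * flat_metric l i j) \<and>
          (\<exists>l'. static_cmc_slice l' (gen_metric l \<phi>) (gen_K l (\<lambda>x i j. \<mu> * sigma_flat i1 l i j) \<tau>0 \<phi>)))"
proof (intro impI conjI allI)
  let ?q = "qexp (real CARD('n))"
  assume "\<tau>0 = 0 \<and> \<mu> = 0"
  then have [simp]: "\<tau>0 = 0" "\<mu> = 0" by simp_all
  have q: "?q > 2" using n by (intro qexp_gt_2) simp
  show "\<exists>\<phi>. LY_solution l (\<lambda>x i j. \<mu> * sigma_flat i1 l i j) \<tau>0 \<phi> \<and>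
            (\<forall>x i j. gen_metric l \<phi> x i j = c * flat_metric l i j)" if "c > 0" for c
  proof (intro exI conjI allI)
    let ?c = "c powr (1 / (?q - 2))"
    show "LY_solution l (\<lambda>x i j. \<mu> * sigma_flat i1 l i j) \<tau>0 (\<lambda>x. ?c)"
      by (rule LY_solution_sigma_flat_constI[OF l]) (use \<open>c > 0\<close> in simp_all)
    show "gen_metric l (\<lambda>x. ?c) x i j = c * flat_metric l i j" for x i j
      using \<open>c > 0\<close> q by (simp add: gen_metric_def powr_powr)
  qed
  fix \<phi> assume LY: "LY_solution l (\<lambda>x i j. \<mu> * sigma_flat i1 l i j) \<tau>0 \<phi>"
  then have \<phi>: "\<And>x. \<phi> x = \<phi> 0"
    using LY_solution_sigma_flat_harmonic_const[OF n l] by simp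
  have "\<phi> 0 > 0" using LY unfolding LY_solution_def by blast
  then show "\<exists>c>0. \<forall>x i j. gen_metric l \<phi> x i j = c * flat_metric l i j"
    using gen_metric_const[where \<phi>=\<phi> and c="\<phi> 0", OF \<phi>] by (auto intro!: exI[of _ "\<phi> 0 powr (?q - 2)"])
  show "\<exists>l'. static_cmc_slice l' (gen_metric l \<phi>) (gen_K l (\<lambda>x i j. \<mu> * sigma_flat i1 l i j) \<tau>0 \<phi>)"
    using static_cmc_slice_const[where \<phi>=\<phi>, OF l \<open>\<phi> 0 > 0\<close> \<phi>] by auto
qed

lemma sigma_flat_no_solution:
  fixes l :: "'n::finite \<Rightarrow> real"
  assumes n: "CARD('n) \<ge> 3" and l: "\<forall>k. l k > 0"
  shows "(\<tau>0 = 0) \<noteq> (\<mu> = 0) \<longrightarrow> \<not> (\<exists>\<phi>. LY_solution l (\<lambda>x i j. \<mu> * sigma_flat i1 l i j) \<tau>0 \<phi>)"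
proof (intro impI notI)
  assume exactly_one: "(\<tau>0 = 0) \<noteq> (\<mu> = 0)"
  assume "\<exists>\<phi>. LY_solution l (\<lambda>x i j. \<mu> * sigma_flat i1 l i j) \<tau>0 \<phi>"
  then obtain \<phi> where LY: "LY_solution l (\<lambda>x i j. \<mu> * sigma_flat i1 l i j) \<tau>0 \<phi>" by blast
  from exactly_one have "\<tau>0 \<noteq> 0 \<or> \<mu> \<noteq> 0" by blast
  then obtain c where "c > 0" and balance: "\<bar>\<tau>0\<bar> * c powr qexp (real CARD('n)) = \<bar>\<mu>\<bar>"
    using LY_solution_sigma_flat_const[OF n l _ LY] by blast
  then have "c powr qexp (real CARD('n)) > 0" by simp
  with balance exactly_one show False by (cases "\<tau>0 = 0") simp_all
qed

theorem proposition4p3: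
  fixes l :: "'n::finite \<Rightarrow> real" and i1 :: 'n and \<mu> \<tau>0 :: real
  assumes n3: "CARD('n) \<ge> 3"
    and lpos: "\<forall>k. l k > 0"
  defines "\<sigma> \<equiv> (\<lambda>(x::real^'n) i j. \<mu> * sigma_flat i1 l i j)"
  shows
   "(\<tau>0 \<noteq> 0 \<and> \<mu> \<noteq> 0 \<and> sgn \<tau>0 = sgn \<mu> \<longrightarrow>
       (\<exists>\<phi>. LY_solution l \<sigma> \<tau>0 \<phi>) \<and>
       (\<forall>\<phi>. LY_solution l \<sigma> \<tau>0 \<phi> \<longrightarrow>
          (\<exists>lb. kasner_cmc_slice (flat_exps i1) lb (\<tau>0 > 0)
                   (gen_metric l \<phi>) (gen_K l \<sigma> \<tau>0 \<phi>)) \<and>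
          torus_volume (gen_metric l \<phi>) = \<bar>\<mu> / \<tau>0\<bar> * (\<Prod>k\<in>UNIV. l k)))
    \<and> (\<tau>0 \<noteq> 0 \<and> \<mu> \<noteq> 0 \<and> sgn \<tau>0 = - sgn \<mu> \<longrightarrow>
       (\<exists>\<phi>. LY_solution l \<sigma> \<tau>0 \<phi>) \<and>
       (\<forall>\<phi>. LY_solution l \<sigma> \<tau>0 \<phi> \<longrightarrow>
          (\<exists>lb. kasner_cmc_slice (dual_exps i1) lb (\<tau>0 > 0)
                   (gen_metric l \<phi>) (gen_K l \<sigma> \<tau>0 \<phi>)) \<and>
          torus_volume (gen_metric l \<phi>) = \<bar>\<mu> / \<tau>0\<bar> * (\<Prod>k\<in>UNIV. l k)))
    \<and> (\<tau>0 = 0 \<and> \<mu> = 0 \<longrightarrow>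
       (\<forall>c>0. \<exists>\<phi>. LY_solution l \<sigma> \<tau>0 \<phi> \<and>
                 (\<forall>x i j. gen_metric l \<phi> x i j = c * flat_metric l i j)) \<and>
       (\<forall>\<phi>. LY_solution l \<sigma> \<tau>0 \<phi> \<longrightarrow>
          (\<exists>c>0. \<forall>x i j. gen_metric l \<phi> x i j = c * flat_metric l i j) \<and>
          (\<exists>l'. static_cmc_slice l' (gen_metric l \<phi>) (gen_K l \<sigma> \<tau>0 \<phi>))))
    \<and> ((\<tau>0 = 0) \<noteq> (\<mu> = 0) \<longrightarrow> \<not> (\<exists>\<phi>. LY_solution l \<sigma> \<tau>0 \<phi>))"
  unfolding \<sigma>_def flat_exps_eq_sigma_flat_kasner_exps dual_exps_eq_sigma_flat_kasner_exps[OF n3]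
  using sigma_flat_kasner_case[OF n3 lpos disjI1[OF refl], of \<tau>0 \<mu> i1]
    sigma_flat_kasner_case[OF n3 lpos disjI2[OF refl], of \<tau>0 \<mu> i1]
    sigma_flat_static_case[OF n3 lpos, of \<tau>0 \<mu> i1] sigma_flat_no_solution[OF n3 lpos, of \<tau>0 \<mu> i1]
  unfolding mult_1_left mult_minus1 by (intro conjI) assumption+

end
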